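(* Let $\Sigma$ be an alphabet and let $\mathcal P=(n,\Gamma,I,M,P,p_0,l)$ be a $\mathbb B\langle\Sigma\cup\{\epsilon\}\rangle$-$\omega$-pushdown automaton over $(\mathbb B\langle\langle\Sigma^*\rangle\rangle,\mathbb B\langle\langle\Sigma^\omega\rangle\rangle)$, with $l\in\{0,\dots,n\}$. Let $\sigma_{x_0}=I(M^* )_{p_0,\epsilon}P$ and $\tau_{z_0}=I(M^{\omega,l})_{p_0}$ be the $x_0$- and $z_0$-components of the solution of order $l$, regarded (via the isomorphism $\mathbb B\langle\langle\Sigma^*\rangle\rangle\times\mathbb B\langle\langle\Sigma^\omega\rangle\rangle\cong 2^{\Sigma^*}\times2^{\Sigma^\omega}$) as a language of finite words and a language of infinite words. Then $$L(G_l)=\sigma_{x_0}\cup\tau_{z_0}.$$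
   Context: $\mathbb B=(\{0,1\},\vee,\wedge,{}^*,0,1)$ with $0^*=1^*=1$ is a complete star-omega semiring, and $(\mathbb B\langle\langle\Sigma^*\rangle\rangle,\mathbb B\langle\langle\Sigma^\omega\rangle\rangle)$ (power series over finite/infinite words, identified with languages) is a complete semiring-semimodule pair (infinite sums = unions, infinite products = concatenations). For a series $s$ and word $a$, $(s,a)$ is the coefficient of $a$ in $s$; $\mathbb B\langle\Sigma\cup\{\epsilon\}\rangle$ is the set of series with support in $\Sigma\cup\{\epsilon\}$. A pushdown transition matrix $M$ ($\Gamma^*\times\Gamma^*$ matrix with $n\times n$ blocks over $\mathbb B\langle\Sigma\cup\{\epsilon\}\rangle$) satisfies (i) for each $p\in\Gamma$ only finitely many blocks $M_{p,\pi}$ are nonzero, and (ii) $M_{\pi_1,\pi_2}=M_{p,\pi}$ if $\pi_1=p\pi'$, $\pi_2=\pi\pi'$ for some $p\in\Gamma$, $\pi,\pi'\in\Gamma^*$, and $0$ otherwise. The automaton consists of states $1,\dots,n$, pushdown alphabet $\Gamma$, such an $M$, $I\in(\mathbb B\langle\Sigma\cup\{\epsilon\}\rangle)^{1\times n}$, $P\in(\mathbb B\langle\Sigma\cup\{\epsilon\}\rangle)^{n\times 1}$, $p_0\in\Gamma$, $l$. $M^*=\sum_{m\ge0}M^m$ with blocks $(M^* )_{\pi,\pi'}$; with $P_l=\{(j_1,j_2,\dots)\in\{1,\dots,n\}^\omega\mid j_t\le l\text{ for infinitely many }t\}$, $((M^{\omega,l})_\pi)_i=\sum_{\pi_1,\pi_2,\ldots\in\Gamma^*}\sum_{(j_1,j_2,\ldots)\in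 P_l}(M_{\pi,\pi_1})_{i,j_1}(M_{\pi_1,\pi_2})_{j_1,j_2}\cdots$. The mixed context-free grammar $G_l=(X,Z,\Sigma,P_X,P_Z,x_0,z_0,l)$ has variables $X=\{x_0\}\cup\{[i,p,j]\mid 1\le i,j\le n,\ p\in\Gamma\}$ (for finite derivations), $Z=\{z_0\}\cup\{[i,p]\mid1\le i\le n,\ p\in\Gamma\}$ (for infinite derivations), and productions: $P_X$: $x_0\to a_1[m_1,p_0,m_2]a_2$ whenever $(I_{m_1},a_1)\ne0$, $(P_{m_2},a_2)\ne0$, $a_1,a_2\in\Sigma\cup\{\epsilon\}$; and $[i,p,j]\to a[m_1,p_1,m_2][m_2,p_2,m_3]\cdots[m_k,p_k,j]$ whenever $k\ge0$, $p_1,\dots,p_k\in\Gamma$, $1\le m_1,\dots,m_k\le n$, $a\in\Sigma\cup\{\epsilon\}$, $((M_{p,p_1\dots p_k})_{i,m_1},a)\ne0$ (for $k=0$ the production is $[i,p,j]\to a$ with $((M_{p,\epsilon})_{i,j},a)\ne0$). $P_Z$: $z_0\to a[m,p_0]$ whenever $(I_m,a)\ne0$, $a\in\Sigma\cup\{\epsilon\}$; and $[i,p]\to a[m_1,p_1,m_2]\cdots[m_{j-1},p_{j-1},m_j][m_j,p_j]$ whenever $k\ge1$, $1\le j\le k$, $p_1,\dots,p_k\in\Gamma$, $1\le m_1,\dots,m_j\le n$, $a\in\Sigma\cup\{\epsilon\}$, $((M_{p,p_1\dots p_k})_{i,m_1},a)\ne0$. Finite leftmost derivations $\Rightarrow_L^*$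 with $P_X$ are as usual. An infinite derivation of $w\in\Sigma^\omega$ is a sequence $z_0\Rightarrow\alpha_0[i_0,q_0]\Rightarrow_L^*w_0[i_0,q_0]\Rightarrow w_0\alpha_1[i_1,q_1]\Rightarrow_L^*w_0w_1[i_1,q_1]\Rightarrow\cdots\Rightarrow_L^* w_0\cdots w_m[i_m,q_m]\Rightarrow w_0\cdots w_m\alpha_{m+1}[i_{m+1},q_{m+1}]\Rightarrow_L^*\cdots$ where $z_0\to\alpha_0[i_0,q_0]$ and $[i_m,q_m]\to\alpha_{m+1}[i_{m+1},q_{m+1}]$ are productions in $P_Z$, each $\alpha_m\Rightarrow_L^* w_m\in\Sigma^*$ is a finite leftmost derivation with $P_X$, and $w=w_0w_1w_2\cdots$. It is a derivation $z_0\Rightarrow_L^{\omega,l}w$ if, letting $i_m^1,\dots,i_m^{t_m}$ be the first components $i$ of the triple variables $[i,p,j]$ rewritten (in order) in $\alpha_m\Rightarrow_L^*w_m$, the sequence $i_0,i_1^1,\dots,i_1^{t_1},i_1,i_2^1,\dots,i_2^{t_2},i_2,\dots$ lies in $P_l$. Then $L(G_l)=\{w\in\Sigma^*\mid x_0\Rightarrow_L^*w\}\cup\{w\in\Sigma^\omega\mid z_0\Rightarrow_L^{\omega,l}w\}$. *)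

theory Defs
  imports Main
begin

(* Conventions:
   - Sigma is the type 'a, the pushdown alphabet Gamma is the type 'g.
   - Elements of Sigma \<union> {eps} are 'a option (None = eps).  A series in
     B<Sigma \<union> {eps}> is identified with its support, an 'a option set.
   - States are the naturals 1..n.
   - The pushdown transition matrix M is given by its blocks
     Mb p \<pi> = M_{p,\<pi>} (an n x n matrix, entries Mb p \<pi> i j).
   - Finite words are 'a list, infinite words are nat \<Rightarrow> 'a. *)

definition oword :: "'a option \<Rightarrow> 'a list" where
  "oword a = (case a of None \<Rightarrow> [] | Some x \<Rightarrow> [x])"

(* infinite concatenation u 0 u 1 u 2 ... which is an omega-word w
   (requires infinitely many nonempty factors) *)
definition concat_inf :: "(nat \<Rightarrow> 'b list) \<Rightarrow> (nat \<Rightarrow> 'b) \<Rightarrow> bool" where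
  "concat_inf u w \<longleftrightarrow>
     (\<forall>k. \<exists>m. k < (\<Sum>i<m. length (u i))) \<and>
     (\<forall>m t. t < length (u m) \<longrightarrow> w ((\<Sum>i<m. length (u i)) + t) = u m ! t)"

definition conc_fw :: "'a list \<Rightarrow> (nat \<Rightarrow> 'a) \<Rightarrow> (nat \<Rightarrow> 'a)" where
  "conc_fw u w = (\<lambda>t. if t < length u then u ! t else w (t - length u))"

definition Pl :: "nat \<Rightarrow> nat \<Rightarrow> (nat \<Rightarrow> nat) \<Rightarrow> bool" where
  "Pl n l s \<longleftrightarrow> (\<forall>t. s t \<in> {1..n}) \<and> infinite {t. s t \<le> l}"

definition pd_finite :: "nat \<Rightarrow> ('g \<Rightarrow> 'g list \<Rightarrow> nat \<Rightarrow> nat \<Rightarrow> 'a option set) \<Rightarrow> bool" where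
  "pd_finite n Mb \<longleftrightarrow>
     (\<forall>p. finite {\<pi>. \<exists>i\<in>{1..n}. \<exists>j\<in>{1..n}. Mb p \<pi> i j \<noteq> {}})"

(* condition (ii): the entries (M_{\<pi>1,\<pi>2})_{i,j} of the full matrix *)
definition Mblock :: "('g \<Rightarrow> 'g list \<Rightarrow> nat \<Rightarrow> nat \<Rightarrow> 'a option set)
    \<Rightarrow> 'g list \<Rightarrow> 'g list \<Rightarrow> nat \<Rightarrow> nat \<Rightarrow> 'a option set" where
  "Mblock Mb \<pi>1 \<pi>2 i j =
     {a. \<exists>p \<pi> \<pi>'. \<pi>1 = p # \<pi>' \<and> \<pi>2 = \<pi> @ \<pi>' \<and> a \<in> Mb p \<pi> i j}"

fun Mpow :: "nat \<Rightarrow> ('g \<Rightarrow> 'g list \<Rightarrow> nat \<Rightarrow> nat \<Rightarrow> 'a option set) \<Rightarrow> nat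
    \<Rightarrow> 'g list \<Rightarrow> 'g list \<Rightarrow> nat \<Rightarrow> nat \<Rightarrow> 'a list set" where
  "Mpow n Mb 0 \<pi>1 \<pi>2 i j = (if \<pi>1 = \<pi>2 \<and> i = j then {[]} else {})"
| "Mpow n Mb (Suc m) \<pi>1 \<pi>2 i j =
     {oword a @ w | a w. \<exists>\<pi> k. k \<in> {1..n} \<and> a \<in> Mblock Mb \<pi>1 \<pi> i k \<and>
                                w \<in> Mpow n Mb m \<pi> \<pi>2 k j}"

definition Mstar :: "nat \<Rightarrow> ('g \<Rightarrow> 'g list \<Rightarrow> nat \<Rightarrow> nat \<Rightarrow> 'a option set)
    \<Rightarrow> 'g list \<Rightarrow> 'g list \<Rightarrow> nat \<Rightarrow> nat \<Rightarrow> 'a list set" where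
  "Mstar n Mb \<pi>1 \<pi>2 i j = (\<Union>m. Mpow n Mb m \<pi>1 \<pi>2 i j)"

definition Momega :: "nat \<Rightarrow> ('g \<Rightarrow> 'g list \<Rightarrow> nat \<Rightarrow> nat \<Rightarrow> 'a option set) \<Rightarrow> nat
    \<Rightarrow> 'g list \<Rightarrow> nat \<Rightarrow> (nat \<Rightarrow> 'a) set" where
  "Momega n Mb l \<pi> i =
     {w. \<exists>\<pi>s js bs. \<pi>s 0 = \<pi> \<and> js 0 = i \<and>
          (\<forall>t. bs t \<in> Mblock Mb (\<pi>s t) (\<pi>s (Suc t)) (js t) (js (Suc t))) \<and>
          Pl n l (\<lambda>t. js (Suc t)) \<and>
          concat_inf (\<lambda>t. oword (bs t)) w}"

definition sigma_x0 :: "nat \<Rightarrow> (nat \<Rightarrow> 'a option set) \<Rightarrow> ('g \<Rightarrow> 'g list \<Rightarrow> nat \<Rightarrow> nat \<Rightarrow> 'a option set)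
    \<Rightarrow> (nat \<Rightarrow> 'a option set) \<Rightarrow> 'g \<Rightarrow> 'a list set" where
  "sigma_x0 n I Mb P p0 =
     {oword a1 @ u @ oword a2 | a1 u a2. \<exists>i\<in>{1..n}. \<exists>j\<in>{1..n}.
         a1 \<in> I i \<and> u \<in> Mstar n Mb [p0] [] i j \<and> a2 \<in> P j}"

definition tau_z0 :: "nat \<Rightarrow> (nat \<Rightarrow> 'a option set) \<Rightarrow> ('g \<Rightarrow> 'g list \<Rightarrow> nat \<Rightarrow> nat \<Rightarrow> 'a option set)
    \<Rightarrow> 'g \<Rightarrow> nat \<Rightarrow> (nat \<Rightarrow> 'a) set" where
  "tau_z0 n I Mb p0 l =
     {conc_fw (oword a) w | a w. \<exists>i\<in>{1..n}. a \<in> I i \<and> w \<in> Momega n Mb l [p0] i}"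

datatype 'g xvar = X0 | Trip nat 'g nat
datatype ('a, 'g) gsym = T 'a | N "'g xvar"

fun tfst :: "'g xvar \<Rightarrow> nat" where
  "tfst (Trip i p j) = i"
| "tfst X0 = 0"

definition osym :: "'a option \<Rightarrow> ('a, 'g) gsym list" where
  "osym a = map T (oword a)"

(* chain [m1..mk] [p1..pk] j = [m1,p1,m2][m2,p2,m3]...[mk,pk,j] *)
fun chain :: "nat list \<Rightarrow> 'g list \<Rightarrow> nat \<Rightarrow> 'g xvar list" where
  "chain (m # ms) (p # ps) j = Trip m p (case ms of [] \<Rightarrow> j | m' # _ \<Rightarrow> m') # chain ms ps j"
| "chain _ _ j = []"

definition prodX :: "nat \<Rightarrow> (nat \<Rightarrow> 'a option set) \<Rightarrow> ('g \<Rightarrow> 'g list \<Rightarrow> nat \<Rightarrow> nat \<Rightarrow> 'a option set)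
    \<Rightarrow> (nat \<Rightarrow> 'a option set) \<Rightarrow> 'g \<Rightarrow> 'g xvar \<Rightarrow> ('a, 'g) gsym list \<Rightarrow> bool" where
  "prodX n I Mb P p0 A \<gamma> = (case A of
     X0 \<Rightarrow> (\<exists>m1 m2 a1 a2. m1 \<in> {1..n} \<and> m2 \<in> {1..n} \<and> a1 \<in> I m1 \<and> a2 \<in> P m2 \<and>
                 \<gamma> = osym a1 @ [N (Trip m1 p0 m2)] @ osym a2)
   | Trip i p j \<Rightarrow> i \<in> {1..n} \<and> j \<in> {1..n} \<and>
        (\<exists>a ps ms. length ms = length ps \<and> set ms \<subseteq> {1..n} \<and>
           a \<in> Mb p ps i (case ms of [] \<Rightarrow> j | m1 # _ \<Rightarrow> m1) \<and>
           \<gamma> = osym a @ map N (chain ms ps j)))"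

inductive lderiv :: "('g xvar \<Rightarrow> ('a, 'g) gsym list \<Rightarrow> bool)
    \<Rightarrow> ('a, 'g) gsym list \<Rightarrow> 'g xvar list \<Rightarrow> ('a, 'g) gsym list \<Rightarrow> bool"
  for R where
  ld_refl: "lderiv R \<alpha> [] \<alpha>"
| ld_step: "R A \<gamma> \<Longrightarrow> lderiv R (map T u @ \<gamma> @ \<beta>) vs \<delta> \<Longrightarrow>
            lderiv R (map T u @ N A # \<beta>) (A # vs) \<delta>"

(* productions P_Z:  z0 -> a [m,p0]  *)
definition zstart :: "nat \<Rightarrow> (nat \<Rightarrow> 'a option set) \<Rightarrow> 'g
    \<Rightarrow> ('a, 'g) gsym list \<Rightarrow> nat \<times> 'g \<Rightarrow> bool" where
  "zstart n I p0 \<alpha> st \<longleftrightarrow> (\<exists>m a. m \<in> {1..n} \<and> a \<in> I m \<and> \<alpha> = osym a \<and> st = (m, p0))"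

(* productions P_Z:  [i,p] -> a [m1,p1,m2]...[m_{j-1},p_{j-1},m_j] [m_j,p_j] *)
definition zprod :: "nat \<Rightarrow> ('g \<Rightarrow> 'g list \<Rightarrow> nat \<Rightarrow> nat \<Rightarrow> 'a option set)
    \<Rightarrow> nat \<times> 'g \<Rightarrow> ('a, 'g) gsym list \<Rightarrow> nat \<times> 'g \<Rightarrow> bool" where
  "zprod n Mb st \<alpha> st' \<longleftrightarrow> fst st \<in> {1..n} \<and>
     (\<exists>a ps j ms. 1 \<le> j \<and> j \<le> length ps \<and> length ms = j \<and> set ms \<subseteq> {1..n} \<and>
        a \<in> Mb (snd st) ps (fst st) (hd ms) \<and>
        \<alpha> = osym a @ map N (chain (butlast ms) (take (j - 1) ps) (last ms)) \<and>
        st' = (last ms, ps ! (j - 1)))"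

definition LG_fin :: "nat \<Rightarrow> (nat \<Rightarrow> 'a option set) \<Rightarrow> ('g \<Rightarrow> 'g list \<Rightarrow> nat \<Rightarrow> nat \<Rightarrow> 'a option set)
    \<Rightarrow> (nat \<Rightarrow> 'a option set) \<Rightarrow> 'g \<Rightarrow> 'a list set" where
  "LG_fin n I Mb P p0 = {w. \<exists>vs. lderiv (prodX n I Mb P p0) [N X0] vs (map T w)}"

definition LG_inf :: "nat \<Rightarrow> (nat \<Rightarrow> 'a option set) \<Rightarrow> ('g \<Rightarrow> 'g list \<Rightarrow> nat \<Rightarrow> nat \<Rightarrow> 'a option set)
    \<Rightarrow> (nat \<Rightarrow> 'a option set) \<Rightarrow> 'g \<Rightarrow> nat \<Rightarrow> (nat \<Rightarrow> 'a) set" where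
  "LG_inf n I Mb P p0 l = {w. \<exists>\<alpha> st ws vs s.
       zstart n I p0 (\<alpha> 0) (st 0) \<and>
       (\<forall>m. zprod n Mb (st m) (\<alpha> (Suc m)) (st (Suc m))) \<and>
       (\<forall>m. lderiv (prodX n I Mb P p0) (\<alpha> m) (vs m) (map T (ws m))) \<and>
       concat_inf ws w \<and>
       concat_inf (\<lambda>m. map tfst (vs m) @ [fst (st m)]) s \<and>
       Pl n l s}"

definition LG :: "nat \<Rightarrow> (nat \<Rightarrow> 'a option set) \<Rightarrow> ('g \<Rightarrow> 'g list \<Rightarrow> nat \<Rightarrow> nat \<Rightarrow> 'a option set)
    \<Rightarrow> (nat \<Rightarrow> 'a option set) \<Rightarrow> 'g \<Rightarrow> nat \<Rightarrow> 'a list set \<times> (nat \<Rightarrow> 'a) set" where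
  "LG n I Mb P p0 l = (LG_fin n I Mb P p0, LG_inf n I Mb P p0 l)"

end

theory Submission
  imports Defs
begin

(* A triple variable [i,p,j] derives exactly the words read by the computations that start in
   state i with p on top of the pushdown and end in state j right after popping p; the first
   components of the triples rewritten along a leftmost derivation are the states in which the
   moves start.  This settles the finite words.
   In an infinite computation call a time a low point if no later pushdown is shorter.  Between
   two consecutive low points, the move leaving the first one replaces its top symbol p by
   p_1 ... p_k, the symbols p_1, ..., p_(j-1) are popped again, and p_j is the top symbol at the
   next low point.  This is a production [i,p] -> a [m_1,p_1,m_2] ... [m_j,p_j] followed by
   derivations of its triple variables, so infinite computations and infinite derivations
   correspond to each other, with the same sequences of states. *)

abbreviation concat_upto :: "(nat \<Rightarrow> 'b list) \<Rightarrow> nat \<Rightarrow> 'b list" where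
  "concat_upto u m \<equiv> concat (map u [0..<m])"

lemma length_concat_upto: "length (concat_upto u m) = (\<Sum>i<m. length (u i))"
  by (induction m) auto

lemma concat_inf_iff_prefixes:
  "concat_inf u w \<longleftrightarrow>
    (\<forall>m. concat_upto u m = map w [0..<length (concat_upto u m)]) \<and>
    (\<forall>k. \<exists>m. k < length (concat_upto u m))"
proof
  assume inf: "concat_inf u w"
  have "concat_upto u m = map w [0..<length (concat_upto u m)]" for m
  proof (induction m)
    case (Suc m)
    let ?k = "length (concat_upto u m)"
    have "map w [?k..<?k + length (u m)] = u m"
      using inf by (intro nth_equalityI) (auto simp: concat_inf_def length_concat_upto)
    then show ?case
      using Suc.IH upt_add_eq_append[of 0 ?k "length (u m)"] by simp
  qed simp
  then show "(\<forall>m. concat_upto u m = map w [0..<length (concat_upto u m)]) \<and>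
    (\<forall>k. \<exists>m. k < length (concat_upto u m))"
    using inf by (simp add: concat_inf_def length_concat_upto)
next
  assume pre: "(\<forall>m. concat_upto u m = map w [0..<length (concat_upto u m)]) \<and>
    (\<forall>k. \<exists>m. k < length (concat_upto u m))"
  have "w (length (concat_upto u m) + t) = u m ! t" if "t < length (u m)" for m t
  proof -
    have "concat_upto u m @ u m = map w [0..<length (concat_upto u m) + length (u m)]"
      using pre[THEN conjunct1, rule_format, of "Suc m"] by simp
    then have "(concat_upto u m @ u m) ! (length (concat_upto u m) + t) =
        map w [0..<length (concat_upto u m) + length (u m)] ! (length (concat_upto u m) + t)"
      by (rule arg_cong)
    with that show ?thesis by (simp add: nth_append)
  qed
  then show "concat_inf u w"
    using pre by (simp add: concat_inf_def length_concat_upto)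
qed

lemma append_eq_map_upt_imp:
  assumes "xs @ zs = map w [0..<k]"
  shows "xs = map w [0..<length xs]"
proof -
  have "length xs \<le> k" using arg_cong[OF assms, of length] by simp
  then show ?thesis
    using arg_cong[OF assms, of "take (length xs)"] by (simp add: take_map)
qed

lemma concat_inf_cofinal_imp:
  assumes "concat_inf u w"
    and "\<And>m. \<exists>m' zs. concat_upto v m @ zs = concat_upto u m'"
    and "\<And>m. \<exists>m' zs. concat_upto u m @ zs = concat_upto v m'"
  shows "concat_inf v w"
  unfolding concat_inf_iff_prefixes
proof (intro conjI allI)
  have pre: "concat_upto u m = map w [0..<length (concat_upto u m)]"
    and cover: "\<exists>m. k < length (concat_upto u m)" for m k
    using assms(1) by (auto simp: concat_inf_iff_prefixes)
  fix m k
  obtain m' zs where "concat_upto v m @ zs = concat_upto u m'" using assms(2) by blast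
  then show "concat_upto v m = map w [0..<length (concat_upto v m)]"
    using pre[of m'] by (metis append_eq_map_upt_imp)
  obtain m where "k < length (concat_upto u m)" using cover by blast
  moreover obtain m' zs where "concat_upto u m @ zs = concat_upto v m'" using assms(3) by blast
  ultimately have "k < length (concat_upto v m')" by (metis length_append trans_less_add1)
  then show "\<exists>m. k < length (concat_upto v m)" by blast
qed

lemma concat_inf_cofinal:
  assumes "\<And>m. \<exists>m' zs. concat_upto u m @ zs = concat_upto v m'"
    and "\<And>m. \<exists>m' zs. concat_upto v m @ zs = concat_upto u m'"
  shows "concat_inf u w \<longleftrightarrow> concat_inf v w"
  using concat_inf_cofinal_imp[of u w v] concat_inf_cofinal_imp[of v w u] assms by blast

lemma concat_upto_regroup:
  assumes "r 0 = 0" "strict_mono r"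
  shows "concat_upto (\<lambda>m. concat (map u [r m..<r (Suc m)])) m = concat_upto u (r m)"
proof (induction m)
  case (Suc m)
  have "r m \<le> r (Suc m)" using assms(2) by (simp add: strict_mono_Suc_iff less_imp_le)
  then show ?case
    using Suc.IH upt_add_eq_append[of 0 "r m" "r (Suc m) - r m"] by simp
qed (simp add: assms(1))

lemma concat_inf_regroup:
  assumes "r 0 = 0" "strict_mono r"
  shows "concat_inf (\<lambda>m. concat (map u [r m..<r (Suc m)])) w \<longleftrightarrow> concat_inf u w"
proof (rule concat_inf_cofinal)
  fix m
  show "\<exists>m' zs. concat_upto (\<lambda>m. concat (map u [r m..<r (Suc m)])) m @ zs = concat_upto u m'"
    using concat_upto_regroup[OF assms] by (metis append_Nil2)
  have "m \<le> r m" using assms(2) by (rule strict_mono_imp_increasing)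
  then have "concat_upto u m @ concat (map u [m..<r m]) = concat_upto u (r m)"
    using upt_add_eq_append[of 0 m "r m - m"] by simp
  then show "\<exists>m' zs. concat_upto u m @ zs = concat_upto (\<lambda>m. concat (map u [r m..<r (Suc m)])) m'"
    using concat_upto_regroup[OF assms] by metis
qed

lemma concat_inf_slice:
  assumes "concat_inf u w"
  shows "map w [length (concat_upto u m)..<length (concat_upto u (Suc m))] = u m"
  using assms by (intro nth_equalityI) (auto simp: concat_inf_def length_concat_upto)

lemma concat_inf_exists:
  assumes "\<And>m. u m \<noteq> []"
  shows "\<exists>w. concat_inf u w"
proof -
  define R where "R m = length (concat_upto u m)" for m
  have "strict_mono R"
    unfolding strict_mono_Suc_iff R_def using assms by simp
  define idx where "idx t = (LEAST m. t < R (Suc m))" for t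
  have idx: "idx (R m + t) = m" if "t < length (u m)" for m t
    unfolding idx_def
  proof (rule Least_equality)
    show "R m + t < R (Suc m)" using that by (simp add: R_def)
    show "m \<le> m'" if "R m + t < R (Suc m')" for m'
      using that \<open>strict_mono R\<close> by (metis Suc_leI le_add1 not_less order.trans strict_mono_less_eq)
  qed
  have "concat_inf u (\<lambda>t. u (idx t) ! (t - R (idx t)))"
    unfolding concat_inf_def length_concat_upto[symmetric] R_def[symmetric]
  proof (intro conjI allI impI)
    fix k
    show "\<exists>m. k < R m"
      using strict_mono_imp_increasing[OF \<open>strict_mono R\<close>, of "Suc k"] by (intro exI[of _ "Suc k"]) simp
  qed (simp add: idx)
  then show ?thesis by blast
qed

lemma sum_length_case_nat_Suc:
  "(\<Sum>i<Suc m. length (case_nat x u i)) = length x + (\<Sum>i<m. length (u i))"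
  by (simp only: sum.lessThan_Suc_shift) simp

lemma unbounded_sum_length_case_nat_iff:
  "(\<forall>k. \<exists>m. k < (\<Sum>i<m. length (case_nat x u i))) \<longleftrightarrow> (\<forall>k. \<exists>m. k < (\<Sum>i<m. length (u i)))"
proof (intro iffI allI)
  fix k
  assume "\<forall>k. \<exists>m. k < (\<Sum>i<m. length (case_nat x u i))"
  then obtain m where "length x + k < (\<Sum>i<m. length (case_nat x u i))" by blast
  then show "\<exists>m. k < (\<Sum>i<m. length (u i))"
    by (cases m) (auto simp del: sum.lessThan_Suc simp add: sum_length_case_nat_Suc)
next
  fix k
  assume "\<forall>k. \<exists>m. k < (\<Sum>i<m. length (u i))"
  then obtain m where "k < (\<Sum>i<m. length (u i))" by blast
  then show "\<exists>m. k < (\<Sum>i<m. length (case_nat x u i))"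
    using sum_length_case_nat_Suc[where m = m and x = x and u = u]
    by (intro exI[of _ "Suc m"]) linarith
qed

lemma concat_inf_case_nat:
  "concat_inf (case_nat x u) W \<longleftrightarrow> (\<exists>w. W = conc_fw x w \<and> concat_inf u w)"
proof -
  note len = sum_length_case_nat_Suc[where x = x and u = u]
  have positions: "(\<forall>m t. t < length (case_nat x u m) \<longrightarrow>
        W ((\<Sum>i<m. length (case_nat x u i)) + t) = case_nat x u m ! t) \<longleftrightarrow>
      (\<forall>t<length x. W t = x ! t) \<and>
      (\<forall>m t. t < length (u m) \<longrightarrow> W (length x + ((\<Sum>i<m. length (u i)) + t)) = u m ! t)"
  proof (intro iffI conjI allI impI)
    fix t
    assume "\<forall>m t. t < length (case_nat x u m) \<longrightarrow>
        W ((\<Sum>i<m. length (case_nat x u i)) + t) = case_nat x u m ! t" and "t < length x"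
    then show "W t = x ! t" by (auto dest: spec[of _ 0])
  next
    fix m t
    assume "\<forall>m t. t < length (case_nat x u m) \<longrightarrow>
        W ((\<Sum>i<m. length (case_nat x u i)) + t) = case_nat x u m ! t" and "t < length (u m)"
    then have "W ((\<Sum>i<Suc m. length (case_nat x u i)) + t) = u m ! t"
      by (simp del: sum.lessThan_Suc)
    then show "W (length x + ((\<Sum>i<m. length (u i)) + t)) = u m ! t"
      by (simp only: len add.assoc)
  next
    fix m t
    assume "(\<forall>t<length x. W t = x ! t) \<and>
      (\<forall>m t. t < length (u m) \<longrightarrow> W (length x + ((\<Sum>i<m. length (u i)) + t)) = u m ! t)"
      and "t < length (case_nat x u m)"
    then show "W ((\<Sum>i<m. length (case_nat x u i)) + t) = case_nat x u m ! t"
      using len by (cases m) (auto simp: add.assoc)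
  qed
  have "concat_inf (case_nat x u) W \<longleftrightarrow>
      (\<forall>t<length x. W t = x ! t) \<and> concat_inf u (\<lambda>t. W (length x + t))"
    unfolding concat_inf_def unbounded_sum_length_case_nat_iff positions by blast
  also have "\<dots> \<longleftrightarrow> (\<exists>w. W = conc_fw x w \<and> concat_inf u w)"
  proof
    assume "(\<forall>t<length x. W t = x ! t) \<and> concat_inf u (\<lambda>t. W (length x + t))"
    then show "\<exists>w. W = conc_fw x w \<and> concat_inf u w"
      by (intro exI[of _ "\<lambda>t. W (length x + t)"]) (auto simp: conc_fw_def fun_eq_iff)
  qed (auto simp: conc_fw_def)
  finally show ?thesis .
qed

lemma concat_inf_singletons: "concat_inf (\<lambda>t. [x t]) s \<longleftrightarrow> s = x"
  unfolding concat_inf_def by (auto intro!: exI[of _ "Suc _"])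

lemma concat_inf_rebracket:
  "concat_inf (\<lambda>m. xs m @ ys m) w \<longleftrightarrow> concat_inf (case_nat (xs 0) (\<lambda>m. ys m @ xs (Suc m))) w"
proof (rule concat_inf_cofinal)
  have shifted: "concat_upto (case_nat (xs 0) (\<lambda>m. ys m @ xs (Suc m))) (Suc m) =
      concat_upto (\<lambda>m. xs m @ ys m) m @ xs m" for m
    by (induction m) auto
  fix m
  show "\<exists>m' zs. concat_upto (\<lambda>m. xs m @ ys m) m @ zs =
      concat_upto (case_nat (xs 0) (\<lambda>m. ys m @ xs (Suc m))) m'"
    by (intro exI[of _ "Suc m"] exI[of _ "xs m"]) (simp only: shifted)
  show "\<exists>m' zs. concat_upto (case_nat (xs 0) (\<lambda>m. ys m @ xs (Suc m))) m @ zs =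
      concat_upto (\<lambda>m. xs m @ ys m) m'"
  proof (cases m)
    case (Suc k)
    then show ?thesis using shifted[of k] by (intro exI[of _ "Suc k"] exI[of _ "ys k"]) simp
  qed simp
qed

lemma concat_inf_state_sequence:
  assumes "r 0 = 0" "strict_mono r" "xs 0 = []"
    and "\<And>m. y m # xs (Suc m) = map js [r m..<r (Suc m)]"
  shows "concat_inf (\<lambda>m. xs m @ [y m]) s \<longleftrightarrow> s = js"
proof -
  have "concat_inf (\<lambda>m. xs m @ [y m]) s \<longleftrightarrow> concat_inf (\<lambda>m. y m # xs (Suc m)) s"
    using concat_inf_rebracket[of xs "\<lambda>m. [y m]" s] concat_inf_case_nat[of "[]"] assms(3)
    by (simp add: conc_fw_def)
  also have "\<dots> \<longleftrightarrow> concat_inf (\<lambda>m. concat (map (\<lambda>t. [js t]) [r m..<r (Suc m)])) s"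
    by (simp only: assms(4) concat_map_singleton)
  also have "\<dots> \<longleftrightarrow> s = js"
    by (simp only: concat_inf_regroup[OF assms(1,2)] concat_inf_singletons)
  finally show ?thesis .
qed

lemma strict_mono_interval_cover:
  fixes R :: "nat \<Rightarrow> nat"
  assumes "R 0 = 0" "strict_mono R"
  obtains m where "R m \<le> t" "t < R (Suc m)"
proof -
  define m where "m = (LEAST m. t < R (Suc m))"
  have "t < R (Suc m)"
    unfolding m_def using strict_mono_imp_increasing[OF assms(2), of "Suc t"]
    by (metis LeastI Suc_le_eq)
  moreover have "R m \<le> t"
  proof (cases m)
    case (Suc k)
    then have "\<not> t < R (Suc k)" using not_less_Least[of k "\<lambda>m. t < R (Suc m)"] m_def by simp
    then show ?thesis using Suc by simp
  qed (simp add: assms(1))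
  ultimately show ?thesis using that by blast
qed

lemma successively_nth:
  "successively P xs \<Longrightarrow> Suc i < length xs \<Longrightarrow> P (xs ! i) (xs ! Suc i)"
proof (induction xs arbitrary: i)
  case (Cons x xs)
  then show ?case by (cases i) (auto simp: successively_Cons neq_Nil_conv)
qed simp

lemma Pl_Suc_iff: "Pl n l s \<longleftrightarrow> s 0 \<in> {1..n} \<and> Pl n l (\<lambda>t. s (Suc t))"
proof -
  have finite_vimage_Suc: "finite (Suc -` A) \<longleftrightarrow> finite A" for A :: "nat set"
  proof
    assume "finite (Suc -` A)"
    then have "finite (insert 0 (Suc ` Suc -` A))" by (intro finite.insertI finite_imageI)
    moreover have "A \<subseteq> insert 0 (Suc ` Suc -` A)" using not0_implies_Suc by fastforce
    ultimately show "finite A" by (rule finite_subset[rotated])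
  qed (simp add: finite_vimageI)
  have "infinite {t. s (Suc t) \<le> l} \<longleftrightarrow> infinite {t. s t \<le> l}"
    using finite_vimage_Suc[of "{t. s t \<le> l}"] by (simp add: vimage_def)
  moreover have "(\<forall>t. s t \<in> {1..n}) \<longleftrightarrow> s 0 \<in> {1..n} \<and> (\<forall>t. s (Suc t) \<in> {1..n})"
    by (metis not0_implies_Suc)
  ultimately show ?thesis unfolding Pl_def by blast
qed

(* ss lists the states in which the moves start. *)
inductive run :: "nat \<Rightarrow> ('g \<Rightarrow> 'g list \<Rightarrow> nat \<Rightarrow> nat \<Rightarrow> 'a option set)
    \<Rightarrow> 'g list \<Rightarrow> nat \<Rightarrow> 'a list \<Rightarrow> nat list \<Rightarrow> 'g list \<Rightarrow> nat \<Rightarrow> bool"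
  for n Mb where
  run_Nil: "run n Mb \<pi> i [] [] \<pi> i"
| run_step: "a \<in> Mb p \<gamma> i k \<Longrightarrow> k \<in> {1..n} \<Longrightarrow> run n Mb (\<gamma> @ \<pi>) k w ss \<pi>' j \<Longrightarrow>
    run n Mb (p # \<pi>) i (oword a @ w) (i # ss) \<pi>' j"

lemma run_append_stack:
  "run n Mb \<pi> i w ss \<pi>' j \<Longrightarrow> run n Mb (\<pi> @ \<beta>) i w ss (\<pi>' @ \<beta>) j"
proof (induction rule: run.induct)
  case (run_step a p \<gamma> i k \<pi> w ss \<pi>' j)
  then have "run n Mb (\<gamma> @ (\<pi> @ \<beta>)) k w ss (\<pi>' @ \<beta>) j" by simp
  with run_step.hyps(1,2) show ?case by (simp add: run.run_step)
qed (rule run_Nil)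

lemma run_trans:
  "run n Mb \<pi>1 i w1 ss1 \<pi>2 j \<Longrightarrow> run n Mb \<pi>2 j w2 ss2 \<pi>3 k \<Longrightarrow>
    run n Mb \<pi>1 i (w1 @ w2) (ss1 @ ss2) \<pi>3 k"
  by (induction rule: run.induct) (auto intro: run_step)

lemma run_from_empty_stack:
  "run n Mb [] i w ss \<pi>' j \<Longrightarrow> w = [] \<and> ss = [] \<and> \<pi>' = [] \<and> j = i"
  by (erule run.cases) auto

lemma run_no_moves: "run n Mb \<pi> i w [] \<pi>' j \<Longrightarrow> w = [] \<and> \<pi>' = \<pi> \<and> j = i"
  by (erule run.cases) auto

lemma run_target_state: "run n Mb \<pi> i w ss \<pi>' j \<Longrightarrow> i \<in> {1..n} \<Longrightarrow> j \<in> {1..n}"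
  by (induction rule: run.induct) auto

lemma run_split_stack:
  assumes "run n Mb (\<alpha> @ \<beta>) i w ss [] j"
  obtains m w1 w2 ss1 ss2 where "run n Mb \<alpha> i w1 ss1 [] m" "run n Mb \<beta> m w2 ss2 [] j"
    "w = w1 @ w2" "ss = ss1 @ ss2"
proof -
  have "run n Mb \<pi> i w ss \<pi>' j \<Longrightarrow> \<pi> = \<alpha> @ \<beta> \<Longrightarrow> \<pi>' = [] \<Longrightarrow>
    \<exists>m w1 w2 ss1 ss2. run n Mb \<alpha> i w1 ss1 [] m \<and> run n Mb \<beta> m w2 ss2 [] j \<and>
      w = w1 @ w2 \<and> ss = ss1 @ ss2" for \<pi> i w ss \<pi>' j
  proof (induction arbitrary: \<alpha> rule: run.induct)
    case (run_Nil \<pi> i)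
    then show ?case by (auto intro: run.run_Nil)
  next
    case (run_step a p \<gamma> i k \<pi> w ss \<pi>' j)
    show ?case
    proof (cases \<alpha>)
      case Nil
      from run_step.hyps have "run n Mb (p # \<pi>) i (oword a @ w) (i # ss) \<pi>' j" by (rule run.run_step)
      with run_step.prems Nil show ?thesis by (fastforce intro: run.run_Nil)
    next
      case (Cons p' \<alpha>')
      with run_step.prems have "p' = p" "\<pi> = \<alpha>' @ \<beta>" by auto
      with run_step.IH[of "\<gamma> @ \<alpha>'"] run_step.prems obtain m w1 w2 ss1 ss2
        where "run n Mb (\<gamma> @ \<alpha>') k w1 ss1 [] m" "run n Mb \<beta> m w2 ss2 [] j"
          "w = w1 @ w2" "ss = ss1 @ ss2"
        by auto
      moreover from run_step.hyps(1,2) this(1)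
      have "run n Mb (p # \<alpha>') i (oword a @ w1) (i # ss1) [] m" by (rule run.run_step)
      ultimately show ?thesis using Cons \<open>p' = p\<close> by fastforce
    qed
  qed
  then show ?thesis using assms that by blast
qed

lemma Mpow_iff_run:
  "u \<in> Mpow n Mb m \<pi> \<pi>' i j \<longleftrightarrow> (\<exists>ss. run n Mb \<pi> i u ss \<pi>' j \<and> length ss = m)"
proof (induction m arbitrary: \<pi> i u)
  case 0
  show ?case
    by (auto dest: run_no_moves intro: run_Nil split: if_splits)
next
  case (Suc m)
  show ?case
  proof
    assume "u \<in> Mpow n Mb (Suc m) \<pi> \<pi>' i j"
    then obtain a w k p \<gamma> \<pi>0 where "u = oword a @ w" "k \<in> {1..n}" "\<pi> = p # \<pi>0"
      "a \<in> Mb p \<gamma> i k" "w \<in> Mpow n Mb m (\<gamma> @ \<pi>0) \<pi>' k j"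
      by (auto simp: Mblock_def)
    with Suc.IH show "\<exists>ss. run n Mb \<pi> i u ss \<pi>' j \<and> length ss = Suc m"
      by (metis length_Cons run_step)
  next
    assume "\<exists>ss. run n Mb \<pi> i u ss \<pi>' j \<and> length ss = Suc m"
    then obtain ss where r: "run n Mb \<pi> i u ss \<pi>' j" "length ss = Suc m" by blast
    from r(1) show "u \<in> Mpow n Mb (Suc m) \<pi> \<pi>' i j"
    proof cases
      case (run_step a p \<gamma> k \<pi>0 w ss')
      then have "w \<in> Mpow n Mb m (\<gamma> @ \<pi>0) \<pi>' k j" using Suc.IH r(2) by auto
      moreover have "a \<in> Mblock Mb \<pi> (\<gamma> @ \<pi>0) i k" using run_step by (auto simp: Mblock_def)
      ultimately show ?thesis using run_step by auto
    qed (use r(2) in simp)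
  qed
qed

lemma Mstar_iff_run: "u \<in> Mstar n Mb \<pi> \<pi>' i j \<longleftrightarrow> (\<exists>ss. run n Mb \<pi> i u ss \<pi>' j)"
  unfolding Mstar_def using Mpow_iff_run by blast

inductive derives :: "('g xvar \<Rightarrow> ('a, 'g) gsym list \<Rightarrow> bool)
    \<Rightarrow> ('a, 'g) gsym list \<Rightarrow> 'g xvar list \<Rightarrow> 'a list \<Rightarrow> bool"
  for R where
  derives_Nil: "derives R [] [] []"
| derives_T: "derives R xs vs w \<Longrightarrow> derives R (T a # xs) vs (a # w)"
| derives_N: "R A \<gamma> \<Longrightarrow> derives R (\<gamma> @ xs) vs w \<Longrightarrow> derives R (N A # xs) (A # vs) w"

inductive_cases derives_NilE: "derives R [] vs w"
inductive_cases derives_TE: "derives R (T a # xs) vs w"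
inductive_cases derives_NE: "derives R (N A # xs) vs w"

lemma derives_Nil_iff: "derives R [] vs w \<longleftrightarrow> vs = [] \<and> w = []"
  by (auto elim: derives_NilE intro: derives_Nil)

lemma derives_map_T_append_iff:
  "derives R (map T u @ \<beta>) vs w \<longleftrightarrow> (\<exists>w'. w = u @ w' \<and> derives R \<beta> vs w')"
  by (induction u arbitrary: w) (auto elim: derives_TE intro: derives_T)

lemma derives_map_T_iff: "derives R (map T u) vs w \<longleftrightarrow> vs = [] \<and> w = u"
  using derives_map_T_append_iff[of R u "[]" vs w] by (auto simp: derives_Nil_iff)

lemma derives_single_N_iff:
  "derives R [N A] vs w \<longleftrightarrow> (\<exists>\<gamma> vs'. vs = A # vs' \<and> R A \<gamma> \<and> derives R \<gamma> vs' w)"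
  by (auto elim!: derives_NE intro: derives_N[of R A _ "[]", simplified])

lemma derives_append:
  "derives R \<alpha> vs1 w1 \<Longrightarrow> derives R \<beta> vs2 w2 \<Longrightarrow> derives R (\<alpha> @ \<beta>) (vs1 @ vs2) (w1 @ w2)"
proof (induction rule: derives.induct)
  case (derives_N A \<gamma> xs vs w)
  then show ?case using derives.derives_N[of R A \<gamma> "xs @ \<beta>"] by simp
qed (auto intro: derives_T)

lemma derives_append_split:
  assumes "derives R (\<alpha> @ \<beta>) vs w"
  obtains vs1 vs2 w1 w2 where "vs = vs1 @ vs2" "w = w1 @ w2"
    "derives R \<alpha> vs1 w1" "derives R \<beta> vs2 w2"
proof -
  have "derives R xs vs w \<Longrightarrow> xs = \<alpha> @ \<beta> \<Longrightarrow>
      \<exists>vs1 vs2 w1 w2. vs = vs1 @ vs2 \<and> w = w1 @ w2 \<and> derives R \<alpha> vs1 w1 \<and> derives R \<beta> vs2 w2"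
    for xs vs w
  proof (induction arbitrary: \<alpha> rule: derives.induct)
    case (derives_T xs vs w a)
    show ?case
    proof (cases \<alpha>)
      case Nil
      with derives_T.prems derives.derives_T[OF derives_T.hyps] show ?thesis
        by (metis append_Nil derives.derives_Nil)
    next
      case (Cons x \<alpha>')
      with derives_T.prems derives_T.IH[of \<alpha>'] show ?thesis
        by (metis append_Cons derives.derives_T list.inject)
    qed
  next
    case (derives_N A \<gamma> xs vs w)
    show ?case
    proof (cases \<alpha>)
      case Nil
      with derives_N.prems derives.derives_N[OF derives_N.hyps] show ?thesis
        by (metis append_Nil derives.derives_Nil)
    next
      case (Cons x \<alpha>')
      with derives_N.prems derives_N.IH[of "\<gamma> @ \<alpha>'"] derives_N.hyps(1) show ?thesis
        by (metis append_Cons append_assoc derives.derives_N list.inject)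
    qed
  qed (auto intro: derives_Nil)
  then show ?thesis using assms that by blast
qed

lemma lderiv_map_T_iff: "lderiv R \<alpha> vs (map T w) \<longleftrightarrow> derives R \<alpha> vs w"
proof
  have "lderiv R \<alpha> vs \<delta> \<Longrightarrow> \<delta> = map T w \<Longrightarrow> derives R \<alpha> vs w" for \<delta> w
  proof (induction arbitrary: w rule: lderiv.induct)
    case (ld_refl \<alpha>)
    then show ?case using derives_map_T_iff[of R w "[]" w] by simp
  next
    case (ld_step A \<gamma> u \<beta> vs \<delta>)
    then obtain w' where "w = u @ w'" "derives R (\<gamma> @ \<beta>) vs w'"
      by (auto simp: derives_map_T_append_iff)
    with ld_step.hyps(1) show ?case
      by (auto simp: derives_map_T_append_iff intro: derives_N)
  qed
  then show "lderiv R \<alpha> vs (map T w) \<Longrightarrow> derives R \<alpha> vs w" by blast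
next
  have lderiv_map_T_prefix: "lderiv R (map T u @ \<beta>) vs (map T u @ \<delta>)"
    if "lderiv R \<beta> vs \<delta>" for u \<beta> vs \<delta>
    using that
  proof (induction rule: lderiv.induct)
    case (ld_step A \<gamma> u' \<beta> vs \<delta>)
    then show ?case using lderiv.ld_step[of R A \<gamma> "u @ u'" \<beta> vs "map T u @ \<delta>"] by simp
  qed (rule ld_refl)
  show "derives R \<alpha> vs w \<Longrightarrow> lderiv R \<alpha> vs (map T w)"
  proof (induction rule: derives.induct)
    case derives_Nil
    then show ?case using ld_refl[of R "[]"] by simp
  next
    case (derives_T xs vs w a)
    then show ?case using lderiv_map_T_prefix[of xs vs "map T w" "[a]"] by simp
  next
    case (derives_N A \<gamma> xs vs w)
    then show ?case using lderiv.ld_step[of R A \<gamma> "[]" xs vs] by simp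
  qed
qed

lemma prodX_X0_iff:
  "prodX n I Mb P p0 X0 \<gamma> \<longleftrightarrow> (\<exists>m1 m2 a1 a2. m1 \<in> {1..n} \<and> m2 \<in> {1..n} \<and>
      a1 \<in> I m1 \<and> a2 \<in> P m2 \<and> \<gamma> = osym a1 @ [N (Trip m1 p0 m2)] @ osym a2)"
  unfolding prodX_def by simp

lemma prodX_Trip_iff:
  "prodX n I Mb P p0 (Trip i p j) \<gamma> \<longleftrightarrow> i \<in> {1..n} \<and> j \<in> {1..n} \<and>
    (\<exists>a ps ms. length ms = length ps \<and> set ms \<subseteq> {1..n} \<and>
       a \<in> Mb p ps i (case ms of [] \<Rightarrow> j | m1 # _ \<Rightarrow> m1) \<and> \<gamma> = osym a @ map N (chain ms ps j))"
  unfolding prodX_def by simp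

lemma chain_derives_imp_run:
  "derives (prodX n I Mb P p0) (map N (chain ms ps j)) vs w \<Longrightarrow> length ms = length ps \<Longrightarrow>
    set ms \<subseteq> {1..n} \<Longrightarrow> j \<in> {1..n} \<Longrightarrow>
    run n Mb ps (case ms of [] \<Rightarrow> j | m # _ \<Rightarrow> m) w (map tfst vs) [] j"
proof (induction "length vs" arbitrary: ms ps j vs w rule: less_induct)
  case less
  show ?case
  proof (cases ms)
    case Nil
    with less.prems show ?thesis by (simp add: derives_Nil_iff run_Nil)
  next
    case (Cons m ms')
    with less.prems(2) obtain p ps' where ps: "ps = p # ps'" by (cases ps) auto
    define m' where "m' = (case ms' of [] \<Rightarrow> j | m' # _ \<Rightarrow> m')"
    have m'_range: "m' \<in> {1..n}" using less.prems(3,4) Cons unfolding m'_def by (cases ms') auto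
    have "map N (chain ms ps j) = [N (Trip m p m')] @ map N (chain ms' ps' j)"
      using Cons ps m'_def by simp
    with less.prems(1) obtain vs1 vs2 w1 w2 where split: "vs = vs1 @ vs2" "w = w1 @ w2"
      "derives (prodX n I Mb P p0) [N (Trip m p m')] vs1 w1"
      "derives (prodX n I Mb P p0) (map N (chain ms' ps' j)) vs2 w2"
      by (metis derives_append_split)
    from split(3) obtain a \<gamma> ms'' vs1' w1' where head: "vs1 = Trip m p m' # vs1'"
      "length ms'' = length \<gamma>" "set ms'' \<subseteq> {1..n}"
      "a \<in> Mb p \<gamma> m (case ms'' of [] \<Rightarrow> m' | m1 # _ \<Rightarrow> m1)" "w1 = oword a @ w1'"
      "derives (prodX n I Mb P p0) (map N (chain ms'' \<gamma> m')) vs1' w1'"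
      by (auto simp: derives_single_N_iff prodX_Trip_iff osym_def derives_map_T_append_iff)
    define k where "k = (case ms'' of [] \<Rightarrow> m' | m1 # _ \<Rightarrow> m1)"
    have "k \<in> {1..n}" using m'_range head(3) unfolding k_def by (cases ms'') auto
    moreover have "run n Mb (\<gamma> @ []) k w1' (map tfst vs1') [] m'"
      using less.hyps[of vs1' ms'' \<gamma> m' w1'] split(1) head m'_range unfolding k_def by simp
    ultimately have "run n Mb [p] m w1 (m # map tfst vs1') [] m'"
      using run_step[where a = a and \<gamma> = \<gamma> and k = k] head(4,5) unfolding k_def by simp
    then have "run n Mb ps m w1 (m # map tfst vs1') ps' m'"
      using run_append_stack[of n Mb "[p]"] ps by fastforce
    moreover have "run n Mb ps' m' w2 (map tfst vs2) [] j"
      using less.hyps[of vs2 ms' ps' j w2] split less.prems Cons ps m'_def head(1) by simp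
    ultimately show ?thesis using run_trans split(1,2) head(1) Cons by fastforce
  qed
qed

lemma run_imp_chain_derives:
  "run n Mb ps i w ss [] j \<Longrightarrow> i \<in> {1..n} \<Longrightarrow> j \<in> {1..n} \<Longrightarrow>
    \<exists>ms vs. length ms = length ps \<and> set ms \<subseteq> {1..n} \<and> (case ms of [] \<Rightarrow> j | m # _ \<Rightarrow> m) = i \<and>
      derives (prodX n I Mb P p0) (map N (chain ms ps j)) vs w \<and> map tfst vs = ss"
proof (induction "length ss" arbitrary: ps i w ss j rule: less_induct)
  case less
  show ?case
  proof (cases ps)
    case Nil
    with less.prems(1) show ?thesis
      by (auto dest: run_from_empty_stack intro: exI[of _ "[]"] simp: derives_Nil_iff)
  next
    case (Cons p ps')
    with less.prems(1) obtain m w1 w2 ss1 ss2 where split: "run n Mb [p] i w1 ss1 [] m"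
      "run n Mb ps' m w2 ss2 [] j" "w = w1 @ w2" "ss = ss1 @ ss2"
      by (metis append_Cons append_Nil run_split_stack)
    from split(1) obtain a \<gamma> k w1' ss1' where head: "a \<in> Mb p \<gamma> i k" "k \<in> {1..n}"
      "run n Mb \<gamma> k w1' ss1' [] m" "w1 = oword a @ w1'" "ss1 = i # ss1'"
      by (cases rule: run.cases) auto
    have m_range: "m \<in> {1..n}" using run_target_state[OF head(3,2)] .
    obtain ms'' vs1' where inner: "length ms'' = length \<gamma>" "set ms'' \<subseteq> {1..n}"
      "(case ms'' of [] \<Rightarrow> m | m' # _ \<Rightarrow> m') = k"
      "derives (prodX n I Mb P p0) (map N (chain ms'' \<gamma> m)) vs1' w1'" "map tfst vs1' = ss1'"
      using less.hyps[of ss1' \<gamma> k w1' m] head split(4) m_range by auto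
    obtain ms' vs2 where rest: "length ms' = length ps'" "set ms' \<subseteq> {1..n}"
      "(case ms' of [] \<Rightarrow> j | m' # _ \<Rightarrow> m') = m"
      "derives (prodX n I Mb P p0) (map N (chain ms' ps' j)) vs2 w2" "map tfst vs2 = ss2"
      using less.hyps[of ss2 ps' m w2 j] head split m_range less.prems(3) by auto
    have "prodX n I Mb P p0 (Trip i p m) (osym a @ map N (chain ms'' \<gamma> m))"
      unfolding prodX_Trip_iff using less.prems(2) m_range inner head(1) by blast
    moreover have "derives (prodX n I Mb P p0) (osym a @ map N (chain ms'' \<gamma> m)) vs1' w1"
      unfolding osym_def derives_map_T_append_iff using head(4) inner(4) by blast
    ultimately have "derives (prodX n I Mb P p0) [N (Trip i p m)] (Trip i p m # vs1') w1"
      by (auto simp: derives_single_N_iff)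
    from derives_append[OF this rest(4)]
    have "derives (prodX n I Mb P p0) (map N (chain (i # ms') ps j)) ((Trip i p m # vs1') @ vs2) w"
      using Cons rest(3) split(3) by simp
    with inner rest Cons split head less.prems(2) show ?thesis
      by (intro exI[of _ "i # ms'"] exI[of _ "(Trip i p m # vs1') @ vs2"]) auto
  qed
qed

lemma LG_fin_eq_sigma_x0: "LG_fin n I Mb P p0 = sigma_x0 n I Mb P p0"
proof (intro set_eqI iffI)
  fix w
  assume "w \<in> LG_fin n I Mb P p0"
  then obtain vs \<gamma> where "prodX n I Mb P p0 X0 \<gamma>" "derives (prodX n I Mb P p0) \<gamma> vs w"
    by (auto simp: LG_fin_def lderiv_map_T_iff derives_single_N_iff)
  then obtain m1 m2 a1 a2 w' where ends: "m1 \<in> {1..n}" "m2 \<in> {1..n}" "a1 \<in> I m1" "a2 \<in> P m2"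
    "w = oword a1 @ w'" "derives (prodX n I Mb P p0) ([N (Trip m1 p0 m2)] @ map T (oword a2)) vs w'"
    by (auto simp: prodX_X0_iff osym_def derives_map_T_append_iff)
  from ends(6) obtain vs1 u where "derives (prodX n I Mb P p0) [N (Trip m1 p0 m2)] vs1 u"
    "w' = u @ oword a2"
    by (metis derives_append_split derives_map_T_iff)
  moreover from this(1) have "run n Mb [p0] m1 u (map tfst vs1) [] m2"
    using chain_derives_imp_run[of n I Mb P p0 "[m1]" "[p0]" m2 vs1 u] ends(1,2) by simp
  ultimately show "w \<in> sigma_x0 n I Mb P p0"
    unfolding sigma_x0_def Mstar_iff_run using ends by blast
next
  fix w
  assume "w \<in> sigma_x0 n I Mb P p0"
  then obtain a1 u a2 i j ss where ends: "w = oword a1 @ u @ oword a2" "i \<in> {1..n}" "j \<in> {1..n}"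
    "a1 \<in> I i" "a2 \<in> P j" "run n Mb [p0] i u ss [] j"
    unfolding sigma_x0_def Mstar_iff_run by blast
  obtain ms vs where "length ms = 1" "(case ms of [] \<Rightarrow> j | m # _ \<Rightarrow> m) = i"
    "derives (prodX n I Mb P p0) (map N (chain ms [p0] j)) vs u"
    using run_imp_chain_derives[OF ends(6,2,3), of I P p0] by auto
  then have "derives (prodX n I Mb P p0) [N (Trip i p0 j)] vs u"
    by (cases ms) auto
  from derives_append[OF this, of "map T (oword a2)" "[]" "oword a2"]
  have "derives (prodX n I Mb P p0) (osym a1 @ [N (Trip i p0 j)] @ osym a2) vs w"
    using ends(1) by (simp add: osym_def derives_map_T_append_iff derives_map_T_iff)
  moreover have "prodX n I Mb P p0 X0 (osym a1 @ [N (Trip i p0 j)] @ osym a2)"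
    unfolding prodX_X0_iff using ends by blast
  ultimately show "w \<in> LG_fin n I Mb P p0"
    unfolding LG_fin_def lderiv_map_T_iff by (auto simp: derives_single_N_iff)
qed

definition inf_run :: "nat \<Rightarrow> ('g \<Rightarrow> 'g list \<Rightarrow> nat \<Rightarrow> nat \<Rightarrow> 'a option set)
    \<Rightarrow> (nat \<Rightarrow> 'g list) \<Rightarrow> (nat \<Rightarrow> nat) \<Rightarrow> (nat \<Rightarrow> 'a option) \<Rightarrow> bool" where
  "inf_run n Mb \<pi>s js bs \<longleftrightarrow>
    (\<forall>t. bs t \<in> Mblock Mb (\<pi>s t) (\<pi>s (Suc t)) (js t) (js (Suc t)) \<and> js (Suc t) \<in> {1..n})"

lemma Momega_iff_inf_run:
  "w \<in> Momega n Mb l \<pi> i \<longleftrightarrow> (\<exists>\<pi>s js bs. \<pi>s 0 = \<pi> \<and> js 0 = i \<and> inf_run n Mb \<pi>s js bs \<and>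
     Pl n l (\<lambda>t. js (Suc t)) \<and> concat_inf (\<lambda>t. oword (bs t)) w)"
  unfolding Momega_def inf_run_def Pl_def by blast

(* r enumerates the low points of h, the times t with h t \<le> h t' for all t' \<ge> t. *)
lemma low_points:
  fixes h :: "nat \<Rightarrow> nat"
  assumes "\<And>t. h 0 \<le> h t"
  obtains r where "r 0 = 0" "strict_mono r" "\<And>m. h (r m) \<le> h (r (Suc m))"
    "\<And>m t. r m < t \<Longrightarrow> t < r (Suc m) \<Longrightarrow> h (r (Suc m)) < h t"
proof -
  define low_point where "low_point t \<longleftrightarrow> (\<forall>t'\<ge>t. h t \<le> h t')" for t
  have minimum: "\<exists>x\<ge>t. \<forall>y\<ge>t. h x \<le> h y" for t
    using ex_has_least_nat[of "\<lambda>x. t \<le> x" t h] by blast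
  define r where "r = rec_nat 0 (\<lambda>_ t. LEAST t'. t < t' \<and> low_point t')"
  have r_Suc: "r (Suc m) = (LEAST t'. r m < t' \<and> low_point t')" for m
    by (simp add: r_def)
  have next_record: "r m < r (Suc m) \<and> low_point (r (Suc m))" for m
  proof -
    obtain x where "Suc (r m) \<le> x" "\<forall>y\<ge>Suc (r m). h x \<le> h y" using minimum by blast
    then have "r m < x \<and> low_point x" unfolding low_point_def by auto
    then show ?thesis unfolding r_Suc by (rule LeastI)
  qed
  have low_point_r: "low_point (r m)" for m
    using assms next_record by (cases m) (auto simp: low_point_def r_def)
  have no_record: "\<not> low_point t" if "r m < t" "t < r (Suc m)" for m t
    using not_less_Least[of t "\<lambda>t'. r m < t' \<and> low_point t'"] that unfolding r_Suc by blast
  show ?thesis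
  proof
    show "r 0 = 0" by (simp add: r_def)
    show "strict_mono r" unfolding strict_mono_Suc_iff using next_record by blast
    show "h (r m) \<le> h (r (Suc m))" for m
      using low_point_r[of m] next_record[of m] by (simp add: low_point_def)
  next
    fix m t
    assume between: "r m < t" "t < r (Suc m)"
    show "h (r (Suc m)) < h t"
    proof (rule ccontr)
      assume "\<not> h (r (Suc m)) < h t"
      obtain x where x: "t \<le> x" "\<forall>y\<ge>t. h x \<le> h y" using minimum by blast
      then have "low_point x" by (auto simp: low_point_def)
      with no_record[of m x] between x(1) have "r (Suc m) \<le> x" by fastforce
      with low_point_r[of "Suc m"] have "h (r (Suc m)) \<le> h x" by (simp add: low_point_def)
      with \<open>\<not> h (r (Suc m)) < h t\<close> x(2) have "low_point t" by (fastforce simp: low_point_def)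
      with no_record between show False by blast
    qed
  qed
qed

lemma inf_run_segment:
  assumes "inf_run n Mb \<pi>s js bs"
  shows "a \<le> b \<Longrightarrow> (\<And>t. a \<le> t \<Longrightarrow> t < b \<Longrightarrow> length (\<pi>s b) < length (\<pi>s t)) \<Longrightarrow>
    \<exists>\<alpha>. \<pi>s a = \<alpha> @ \<pi>s b \<and>
      run n Mb \<alpha> (js a) (concat (map (\<lambda>t. oword (bs t)) [a..<b])) (map js [a..<b]) [] (js b)"
proof (induction "b - a" arbitrary: a)
  case 0
  then show ?case by (auto intro: run_Nil)
next
  case (Suc d)
  then have "a < b" by simp
  then obtain \<alpha>' where IH: "\<pi>s (Suc a) = \<alpha>' @ \<pi>s b" "run n Mb \<alpha>' (js (Suc a))
      (concat (map (\<lambda>t. oword (bs t)) [Suc a..<b])) (map js [Suc a..<b]) [] (js b)"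
    using Suc.hyps(1)[of "Suc a"] Suc.hyps(2) Suc.prems(2) by fastforce
  from assms obtain p \<gamma> \<pi>' where move: "\<pi>s a = p # \<pi>'" "\<pi>s (Suc a) = \<gamma> @ \<pi>'"
    "bs a \<in> Mb p \<gamma> (js a) (js (Suc a))" "js (Suc a) \<in> {1..n}"
    unfolding inf_run_def Mblock_def by blast
  from Suc.prems(2)[of a] \<open>a < b\<close> move(1) have "length (\<pi>s b) \<le> length \<pi>'" by simp
  moreover from IH(1) move(2) have "\<alpha>' @ \<pi>s b = \<gamma> @ \<pi>'" by simp
  then obtain us where
    "\<alpha>' = \<gamma> @ us \<and> us @ \<pi>s b = \<pi>' \<or> \<alpha>' @ us = \<gamma> \<and> \<pi>s b = us @ \<pi>'"
    unfolding append_eq_append_conv2 by blast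
  ultimately obtain us where "\<alpha>' = \<gamma> @ us" "\<pi>' = us @ \<pi>s b"
    by force
  with IH(2) move(3,4) have "run n Mb (p # us) (js a)
      (oword (bs a) @ concat (map (\<lambda>t. oword (bs t)) [Suc a..<b])) (js a # map js [Suc a..<b]) [] (js b)"
    by (auto intro: run_step)
  with \<open>a < b\<close> move(1) \<open>\<pi>' = us @ \<pi>s b\<close> show ?case by (auto simp: upt_conv_Cons)
qed

lemma inf_run_segment_production:
  assumes run: "inf_run n Mb \<pi>s js bs" and start: "js t0 \<in> {1..n}" and "t0 < t1"
    and low: "length (\<pi>s t0) \<le> length (\<pi>s t1)"
    and above: "\<And>t. t0 < t \<Longrightarrow> t < t1 \<Longrightarrow> length (\<pi>s t1) < length (\<pi>s t)"
  shows "\<exists>A Vs. zprod n Mb (js t0, hd (\<pi>s t0)) A (js t1, hd (\<pi>s t1)) \<and>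
    derives (prodX n I Mb P p0) A Vs (concat (map (\<lambda>t. oword (bs t)) [t0..<t1])) \<and>
    map tfst Vs = map js [Suc t0..<t1]"
proof -
  from run obtain q \<sigma> ps where move: "\<pi>s t0 = q # \<sigma>" "\<pi>s (Suc t0) = ps @ \<sigma>"
    "bs t0 \<in> Mb q ps (js t0) (js (Suc t0))"
    unfolding inf_run_def Mblock_def by blast
  have range: "js (Suc t0) \<in> {1..n}" "js t1 \<in> {1..n}"
    using run \<open>t0 < t1\<close> less_imp_Suc_add[OF \<open>t0 < t1\<close>] by (auto simp: inf_run_def)
  obtain \<alpha> where seg: "\<pi>s (Suc t0) = \<alpha> @ \<pi>s t1" "run n Mb \<alpha> (js (Suc t0))
      (concat (map (\<lambda>t. oword (bs t)) [Suc t0..<t1])) (map js [Suc t0..<t1]) [] (js t1)"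
    using inf_run_segment[OF run, of "Suc t0" t1] \<open>t0 < t1\<close> above by auto
  from seg(1) move(2) have "\<alpha> @ \<pi>s t1 = ps @ \<sigma>" by simp
  moreover from arg_cong[OF this, of length] low move(1) have "length \<alpha> < length ps"
    by simp
  ultimately have popped: "\<alpha> = take (length \<alpha>) ps" "\<pi>s t1 = drop (length \<alpha>) ps @ \<sigma>"
    by (simp_all add: append_eq_append_conv_if)
  obtain ms' Vs where chain: "length ms' = length \<alpha>" "set ms' \<subseteq> {1..n}"
    "(case ms' of [] \<Rightarrow> js t1 | m # _ \<Rightarrow> m) = js (Suc t0)"
    "derives (prodX n I Mb P p0) (map N (chain ms' \<alpha> (js t1))) Vs
      (concat (map (\<lambda>t. oword (bs t)) [Suc t0..<t1]))"
    "map tfst Vs = map js [Suc t0..<t1]"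
    using run_imp_chain_derives[OF seg(2) range] by blast
  define ms where "ms = ms' @ [js t1]"
  have "hd ms = js (Suc t0)" using chain(3) by (cases ms') (auto simp: ms_def)
  have "zprod n Mb (js t0, hd (\<pi>s t0)) (osym (bs t0) @ map N (chain ms' \<alpha> (js t1)))
      (js t1, hd (\<pi>s t1))"
    unfolding zprod_def fst_conv snd_conv
  proof (intro conjI exI)
    show "Suc (length \<alpha>) \<le> length ps" using \<open>length \<alpha> < length ps\<close> by simp
    show "length ms = Suc (length \<alpha>)" using chain(1) by (simp add: ms_def)
    show "set ms \<subseteq> {1..n}" using chain(2) range by (auto simp: ms_def)
    show "bs t0 \<in> Mb (hd (\<pi>s t0)) ps (js t0) (hd ms)" using move \<open>hd ms = js (Suc t0)\<close> by simp
    show "osym (bs t0) @ map N (chain ms' \<alpha> (js t1)) =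
        osym (bs t0) @ map N (chain (butlast ms) (take (Suc (length \<alpha>) - 1) ps) (last ms))"
      using popped(1) by (simp add: ms_def)
    show "(js t1, hd (\<pi>s t1)) = (last ms, ps ! (Suc (length \<alpha>) - 1))"
      using popped(2) \<open>length \<alpha> < length ps\<close> by (simp add: ms_def hd_drop_conv_nth)
  qed (use start in simp_all)
  moreover have "derives (prodX n I Mb P p0) (osym (bs t0) @ map N (chain ms' \<alpha> (js t1))) Vs
      (concat (map (\<lambda>t. oword (bs t)) [t0..<t1]))"
    using chain(4) \<open>t0 < t1\<close> by (simp add: osym_def derives_map_T_append_iff upt_conv_Cons)
  ultimately show ?thesis using chain(5) by blast
qed

lemma inf_run_segmentation:
  assumes run: "inf_run n Mb \<pi>s js bs" and start: "js 0 \<in> {1..n}" "length (\<pi>s 0) = 1"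
  obtains r A Vs where "r 0 = 0" "strict_mono r"
    "\<And>m. zprod n Mb (js (r m), hd (\<pi>s (r m))) (A m) (js (r (Suc m)), hd (\<pi>s (r (Suc m))))"
    "\<And>m. derives (prodX n I Mb P p0) (A m) (Vs m) (concat (map (\<lambda>t. oword (bs t)) [r m..<r (Suc m)]))"
    "\<And>m. map tfst (Vs m) = map js [Suc (r m)..<r (Suc m)]"
proof -
  have range: "js t \<in> {1..n}" for t
    using run start by (cases t) (auto simp: inf_run_def)
  have "length (\<pi>s 0) \<le> length (\<pi>s t)" for t
  proof -
    from run obtain p \<pi>' where "\<pi>s t = p # \<pi>'" unfolding inf_run_def Mblock_def by blast
    with start(2) show ?thesis by simp
  qed
  then obtain r where r: "r 0 = 0" "strict_mono r"
    "\<And>m. length (\<pi>s (r m)) \<le> length (\<pi>s (r (Suc m)))"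
    "\<And>m t. r m < t \<Longrightarrow> t < r (Suc m) \<Longrightarrow> length (\<pi>s (r (Suc m))) < length (\<pi>s t)"
    by (rule low_points) blast
  have "\<exists>A Vs. zprod n Mb (js (r m), hd (\<pi>s (r m))) A (js (r (Suc m)), hd (\<pi>s (r (Suc m)))) \<and>
    derives (prodX n I Mb P p0) A Vs (concat (map (\<lambda>t. oword (bs t)) [r m..<r (Suc m)])) \<and>
    map tfst Vs = map js [Suc (r m)..<r (Suc m)]" for m
    using inf_run_segment_production[OF run range] r by (simp add: strict_mono_Suc_iff)
  then obtain A Vs where "\<And>m. zprod n Mb (js (r m), hd (\<pi>s (r m))) (A m)
      (js (r (Suc m)), hd (\<pi>s (r (Suc m)))) \<and>
    derives (prodX n I Mb P p0) (A m) (Vs m) (concat (map (\<lambda>t. oword (bs t)) [r m..<r (Suc m)])) \<and>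
    map tfst (Vs m) = map js [Suc (r m)..<r (Suc m)]"
    by metis
  with r(1,2) that show ?thesis by blast
qed

lemma tau_z0_subset_LG_inf: "tau_z0 n I Mb p0 l \<subseteq> LG_inf n I Mb P p0 l"
proof
  fix W
  assume "W \<in> tau_z0 n I Mb p0 l"
  then obtain a0 w i \<pi>s js bs where W: "W = conc_fw (oword a0) w"
    and start: "i \<in> {1..n}" "a0 \<in> I i" "\<pi>s 0 = [p0]" "js 0 = i"
    and run: "inf_run n Mb \<pi>s js bs" and accepting: "Pl n l (\<lambda>t. js (Suc t))"
    and word: "concat_inf (\<lambda>t. oword (bs t)) w"
    unfolding tau_z0_def Momega_iff_inf_run by blast
  have "js 0 \<in> {1..n}" "length (\<pi>s 0) = 1" using start by simp_all
  then obtain r A Vs where r: "r 0 = 0" "strict_mono r"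
    and prods: "\<And>m. zprod n Mb (js (r m), hd (\<pi>s (r m))) (A m) (js (r (Suc m)), hd (\<pi>s (r (Suc m))))"
    and derivs: "\<And>m. derives (prodX n I Mb P p0) (A m) (Vs m)
      (concat (map (\<lambda>t. oword (bs t)) [r m..<r (Suc m)]))"
    and states: "\<And>m. map tfst (Vs m) = map js [Suc (r m)..<r (Suc m)]"
    by (rule inf_run_segmentation[OF run, where I = I and P = P and ?p0.0 = p0]) blast
  define st where "st m = (js (r m), hd (\<pi>s (r m)))" for m
  define ws where "ws = case_nat (oword a0) (\<lambda>m. concat (map (\<lambda>t. oword (bs t)) [r m..<r (Suc m)]))"
  define vs where "vs = case_nat [] Vs"
  have "zstart n I p0 (osym a0) (st 0)"
    unfolding zstart_def st_def using r(1) start by auto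
  moreover have "zprod n Mb (st m) (A m) (st (Suc m))" for m
    using prods by (simp add: st_def)
  moreover have "lderiv (prodX n I Mb P p0) (case_nat (osym a0) A m) (vs m) (map T (ws m))" for m
    using derivs by (cases m) (simp_all add: lderiv_map_T_iff vs_def ws_def osym_def derives_map_T_iff)
  moreover have "concat_inf ws W"
    unfolding ws_def W concat_inf_case_nat using concat_inf_regroup[OF r] word by blast
  moreover have "concat_inf (\<lambda>m. map tfst (vs m) @ [fst (st m)]) js"
    using states r(2) by (subst concat_inf_state_sequence[OF r])
      (auto simp: vs_def st_def strict_mono_Suc_iff upt_conv_Cons)
  moreover have "Pl n l js" using Pl_Suc_iff start accepting by blast
  ultimately show "W \<in> LG_inf n I Mb P p0 l"
    unfolding LG_inf_def
    by (intro CollectI exI[of _ "case_nat (osym a0) A"] exI[of _ st] exI[of _ ws] exI[of _ vs]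
        exI[of _ js] conjI allI) simp_all
qed

lemma zprod_derives_run:
  assumes "zprod n Mb st A st'" and "derives (prodX n I Mb P p0) A vs w"
  obtains \<delta> where
    "\<And>\<sigma>. run n Mb (snd st # \<sigma>) (fst st) w (fst st # map tfst vs) (snd st' # \<delta> @ \<sigma>) (fst st')"
proof -
  from assms(1) obtain a ps k ms where prod: "fst st \<in> {1..n}" "1 \<le> k" "k \<le> length ps"
    "length ms = k" "set ms \<subseteq> {1..n}" "a \<in> Mb (snd st) ps (fst st) (hd ms)"
    "A = osym a @ map N (chain (butlast ms) (take (k - 1) ps) (last ms))"
    "st' = (last ms, ps ! (k - 1))"
    unfolding zprod_def by blast
  from assms(2) prod(7) obtain w' where w: "w = oword a @ w'"
    "derives (prodX n I Mb P p0) (map N (chain (butlast ms) (take (k - 1) ps) (last ms))) vs w'"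
    by (auto simp: osym_def derives_map_T_append_iff)
  have "ms \<noteq> []" using prod(2,4) by auto
  then have range: "hd ms \<in> {1..n}" "last ms \<in> {1..n}" "set (butlast ms) \<subseteq> {1..n}"
    using prod(5) hd_in_set last_in_set by (blast dest: in_set_butlastD)+
  have "(case butlast ms of [] \<Rightarrow> last ms | m # _ \<Rightarrow> m) = hd ms"
    using \<open>ms \<noteq> []\<close> by (induction ms) (auto split: list.split)
  moreover have "length (butlast ms) = length (take (k - 1) ps)" using prod(3,4) by simp
  ultimately have popping: "run n Mb (take (k - 1) ps) (hd ms) w' (map tfst vs) [] (last ms)"
    using chain_derives_imp_run[OF w(2) _ range(3,2)] by simp
  have "run n Mb (ps @ \<sigma>) (hd ms) w' (map tfst vs) (drop (k - 1) ps @ \<sigma>) (last ms)" for \<sigma>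
    using run_append_stack[OF popping, of "drop (k - 1) ps @ \<sigma>"]
    by (simp add: append_assoc[symmetric] del: append_assoc)
  moreover have "drop (k - 1) ps = ps ! (k - 1) # drop k ps"
    using Cons_nth_drop_Suc[of "k - 1" ps] prod(2,3) by simp
  ultimately have "run n Mb (snd st # \<sigma>) (fst st) w (fst st # map tfst vs) (snd st' # drop k ps @ \<sigma>)
      (fst st')" for \<sigma>
    using run_step[where Mb = Mb and \<gamma> = ps, OF prod(6) range(1)] w(1) prod(8) by simp
  then show ?thesis by (rule that)
qed

lemma productions_chain_runs:
  assumes "\<And>m. zprod n Mb (st m) (\<alpha> (Suc m)) (st (Suc m))"
    and "\<And>m. derives (prodX n I Mb P p0) (\<alpha> m) (vs m) (ws m)"
  obtains \<sigma> where "\<sigma> 0 = []"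
    "\<And>m. run n Mb (snd (st m) # \<sigma> m) (fst (st m)) (ws (Suc m)) (fst (st m) # map tfst (vs (Suc m)))
      (snd (st (Suc m)) # \<sigma> (Suc m)) (fst (st (Suc m)))"
proof -
  have "\<exists>\<delta>. \<forall>\<sigma>. run n Mb (snd (st m) # \<sigma>) (fst (st m)) (ws (Suc m))
      (fst (st m) # map tfst (vs (Suc m))) (snd (st (Suc m)) # \<delta> @ \<sigma>) (fst (st (Suc m)))" for m
  proof -
    obtain \<delta> where "\<And>\<sigma>. run n Mb (snd (st m) # \<sigma>) (fst (st m)) (ws (Suc m))
        (fst (st m) # map tfst (vs (Suc m))) (snd (st (Suc m)) # \<delta> @ \<sigma>) (fst (st (Suc m)))"
      by (rule zprod_derives_run[OF assms(1)[of m] assms(2)[of "Suc m"]]) blast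
    then show ?thesis by blast
  qed
  then obtain \<delta> where pushes: "\<And>m \<sigma>. run n Mb (snd (st m) # \<sigma>) (fst (st m)) (ws (Suc m))
      (fst (st m) # map tfst (vs (Suc m))) (snd (st (Suc m)) # \<delta> m @ \<sigma>) (fst (st (Suc m)))"
    by metis
  \<comment> \<open>below the current top lie the leftover symbols of all earlier segments\<close>
  show ?thesis
    by (rule that[of "rec_nat [] (\<lambda>m \<sigma>. \<delta> m @ \<sigma>)"]) (simp_all add: pushes)
qed

(* A configuration (\<pi>, i, a) consists of the pushdown, the state, and the letter read by the
   move leaving it. *)
definition move :: "nat \<Rightarrow> ('g \<Rightarrow> 'g list \<Rightarrow> nat \<Rightarrow> nat \<Rightarrow> 'a option set)
    \<Rightarrow> 'g list \<times> nat \<times> 'a option \<Rightarrow> 'g list \<times> nat \<times> 'a option \<Rightarrow> bool" where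
  "move n Mb c c' \<longleftrightarrow>
    snd (snd c) \<in> Mblock Mb (fst c) (fst c') (fst (snd c)) (fst (snd c')) \<and> fst (snd c') \<in> {1..n}"

lemma run_configurations:
  "run n Mb \<pi> i w ss \<pi>' j \<Longrightarrow> \<exists>cs. map (\<lambda>c. fst (snd c)) cs = ss \<and>
    concat (map (\<lambda>c. oword (snd (snd c))) cs) = w \<and> successively (move n Mb) (cs @ [(\<pi>', j, None)]) \<and>
    fst (hd (cs @ [(\<pi>', j, None)])) = \<pi> \<and> fst (snd (hd (cs @ [(\<pi>', j, None)]))) = i"
proof (induction rule: run.induct)
  case (run_step a p \<gamma> i k \<pi> w ss \<pi>' j)
  then obtain cs where cs: "map (\<lambda>c. fst (snd c)) cs = ss" "concat (map (\<lambda>c. oword (snd (snd c))) cs) = w"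
    "successively (move n Mb) (cs @ [(\<pi>', j, None)])"
    "fst (hd (cs @ [(\<pi>', j, None)])) = \<gamma> @ \<pi>" "fst (snd (hd (cs @ [(\<pi>', j, None)]))) = k"
    by blast
  with run_step.hyps(1,2) have "move n Mb (p # \<pi>, i, a) (hd (cs @ [(\<pi>', j, None)]))"
    by (auto simp: move_def Mblock_def)
  with cs show ?case
    by (intro exI[of _ "(p # \<pi>, i, a) # cs"]) (simp add: successively_Cons)
qed simp

lemma concat_inf_successively:
  assumes "concat_inf cs C" "\<And>m. cs m \<noteq> []" "\<And>m. successively Q (cs m @ [hd (cs (Suc m))])"
  shows "Q (C t) (C (Suc t))"
proof -
  define R where "R m = length (concat_upto cs m)" for m
  have "R 0 = 0" "strict_mono R"
    using assms(2) by (simp_all add: R_def strict_mono_Suc_iff)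
  then obtain m where m: "R m \<le> t" "t < R (Suc m)" by (rule strict_mono_interval_cover)
  have slice: "map C [R m..<R (Suc m)] = cs m" for m
    unfolding R_def by (rule concat_inf_slice[OF assms(1)])
  have "R (Suc m) < R (Suc (Suc m))" using \<open>strict_mono R\<close> by (simp add: strict_mono_Suc_iff)
  then have "hd (cs (Suc m)) = C (R (Suc m))" by (simp flip: slice add: upt_conv_Cons)
  moreover have "R m \<le> R (Suc m)" using m by simp
  ultimately have "map C [R m..<Suc (R (Suc m))] = cs m @ [hd (cs (Suc m))]"
    by (simp add: slice)
  with assms(3) have "successively Q (map C [R m..<Suc (R (Suc m))])" by simp
  from successively_nth[OF this, of "t - R m"] m show ?thesis by (simp del: upt_Suc)
qed

lemma runs_concat_inf_run:
  assumes runs: "\<And>m. run n Mb (\<pi> m) (i m) (w m) (ss m) (\<pi> (Suc m)) (i (Suc m))"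
    and moving: "\<And>m. ss m \<noteq> []"
  obtains \<pi>s js bs R where "inf_run n Mb \<pi>s js bs" "R 0 = 0" "strict_mono R"
    "\<pi>s 0 = \<pi> 0" "js 0 = i 0" "\<And>m. map js [R m..<R (Suc m)] = ss m"
    "\<And>m. concat (map (\<lambda>t. oword (bs t)) [R m..<R (Suc m)]) = w m"
proof -
  obtain cs where states: "\<And>m. map (\<lambda>c. fst (snd c)) (cs m) = ss m"
    and letters: "\<And>m. concat (map (\<lambda>c. oword (snd (snd c))) (cs m)) = w m"
    and moves: "\<And>m. successively (move n Mb) (cs m @ [(\<pi> (Suc m), i (Suc m), None)])"
    and first: "\<And>m. fst (hd (cs m @ [(\<pi> (Suc m), i (Suc m), None)])) = \<pi> m"
      "\<And>m. fst (snd (hd (cs m @ [(\<pi> (Suc m), i (Suc m), None)]))) = i m"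
    using run_configurations[OF runs] by metis
  have nonempty: "cs m \<noteq> []" for m using states[of m] moving[of m] by auto
  with first have hd_cs: "fst (hd (cs m)) = \<pi> m" "fst (snd (hd (cs m))) = i m" for m by simp_all
  obtain C where C: "concat_inf cs C" using concat_inf_exists nonempty by blast
  have "successively (move n Mb) (cs m @ [hd (cs (Suc m))])" for m
    using moves[of m] hd_cs[of "Suc m"] nonempty[of m]
    by (simp add: successively_append_iff move_def)
  then have step: "move n Mb (C t) (C (Suc t))" for t
    by (rule concat_inf_successively[OF C nonempty])
  define R where "R m = length (concat_upto cs m)" for m
  have slice: "map C [R m..<R (Suc m)] = cs m" for m
    unfolding R_def by (rule concat_inf_slice[OF C])
  have "R 0 < R (Suc 0)" using nonempty[of 0] by (simp add: R_def)
  then have "C 0 = hd (cs 0)" using arg_cong[OF slice[of 0], of hd] by (simp add: R_def upt_conv_Cons)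
  show ?thesis
  proof (rule that[of "\<lambda>t. fst (C t)" "\<lambda>t. fst (snd (C t))" "\<lambda>t. snd (snd (C t))" R])
    show "inf_run n Mb (\<lambda>t. fst (C t)) (\<lambda>t. fst (snd (C t))) (\<lambda>t. snd (snd (C t)))"
      using step by (simp add: inf_run_def move_def)
    show "strict_mono R" using nonempty by (simp add: R_def strict_mono_Suc_iff)
    show "map (\<lambda>t. fst (snd (C t))) [R m..<R (Suc m)] = ss m" for m
      by (simp flip: states slice add: comp_def)
    show "concat (map (\<lambda>t. oword (snd (snd (C t)))) [R m..<R (Suc m)]) = w m" for m
      by (simp flip: letters slice add: comp_def)
  qed (use \<open>C 0 = hd (cs 0)\<close> hd_cs in \<open>simp_all add: R_def\<close>)
qed

lemma LG_inf_subset_tau_z0: "LG_inf n I Mb P p0 l \<subseteq> tau_z0 n I Mb p0 l"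
proof
  fix W
  assume "W \<in> LG_inf n I Mb P p0 l"
  then obtain \<alpha> st ws vs s where start: "zstart n I p0 (\<alpha> 0) (st 0)"
    and prods: "\<And>m. zprod n Mb (st m) (\<alpha> (Suc m)) (st (Suc m))"
    and derivs: "\<And>m. derives (prodX n I Mb P p0) (\<alpha> m) (vs m) (ws m)"
    and word: "concat_inf ws W" and states: "concat_inf (\<lambda>m. map tfst (vs m) @ [fst (st m)]) s"
    and accepting: "Pl n l s"
    unfolding LG_inf_def lderiv_map_T_iff by blast
  from start obtain i a0 where init: "i \<in> {1..n}" "a0 \<in> I i" "\<alpha> 0 = osym a0" "st 0 = (i, p0)"
    unfolding zstart_def by blast
  with derivs[of 0] have "vs 0 = []" "ws 0 = oword a0"
    by (simp_all add: osym_def derives_map_T_iff)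
  obtain \<sigma> where "\<sigma> 0 = []" and runs:
    "\<And>m. run n Mb (snd (st m) # \<sigma> m) (fst (st m)) (ws (Suc m)) (fst (st m) # map tfst (vs (Suc m)))
      (snd (st (Suc m)) # \<sigma> (Suc m)) (fst (st (Suc m)))"
    using productions_chain_runs[where st = st and \<alpha> = \<alpha> and vs = vs and ws = ws, OF prods derivs]
    by blast
  from runs obtain \<pi>s js bs R where run: "inf_run n Mb \<pi>s js bs" and R: "R 0 = 0" "strict_mono R"
    and init_run: "\<pi>s 0 = [p0]" "js 0 = i"
    and run_states: "\<And>m. map js [R m..<R (Suc m)] = fst (st m) # map tfst (vs (Suc m))"
    and run_word: "\<And>m. concat (map (\<lambda>t. oword (bs t)) [R m..<R (Suc m)]) = ws (Suc m)"
    by (rule runs_concat_inf_run[where \<pi> = "\<lambda>m. snd (st m) # \<sigma> m" and i = "\<lambda>m. fst (st m)"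
        and w = "\<lambda>m. ws (Suc m)" and ss = "\<lambda>m. fst (st m) # map tfst (vs (Suc m))"])
      (use init \<open>\<sigma> 0 = []\<close> in simp_all)
  have "s = js"
    using states concat_inf_state_sequence[where xs = "\<lambda>m. map tfst (vs m)" and y = "\<lambda>m. fst (st m)",
        OF R _ run_states[symmetric]] \<open>vs 0 = []\<close> by simp
  with accepting have "Pl n l (\<lambda>t. js (Suc t))" using Pl_Suc_iff by blast
  have "case_nat (oword a0) (\<lambda>m. ws (Suc m)) = ws"
    using \<open>ws 0 = oword a0\<close> by (auto split: nat.split)
  with word have "concat_inf (case_nat (oword a0) (\<lambda>m. ws (Suc m))) W" by simp
  then obtain w where "W = conc_fw (oword a0) w" "concat_inf (\<lambda>m. ws (Suc m)) w"
    unfolding concat_inf_case_nat by blast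
  moreover from this(2) have "concat_inf (\<lambda>t. oword (bs t)) w"
    using concat_inf_regroup[OF R, of "\<lambda>t. oword (bs t)" w] run_word by simp
  ultimately show "W \<in> tau_z0 n I Mb p0 l"
    unfolding tau_z0_def Momega_iff_inf_run
    using init init_run run \<open>Pl n l (\<lambda>t. js (Suc t))\<close> by blast
qed

theorem theorem14:
  fixes n l :: nat
    and I P :: "nat \<Rightarrow> ('a::finite) option set"
    and Mb :: "('g::finite) \<Rightarrow> 'g list \<Rightarrow> nat \<Rightarrow> nat \<Rightarrow> 'a option set"
    and p0 :: 'g
  assumes "pd_finite n Mb"
    and "l \<le> n"
  shows "LG n I Mb P p0 l = (sigma_x0 n I Mb P p0, tau_z0 n I Mb p0 l)"
proof -
  have "LG_inf n I Mb P p0 l = tau_z0 n I Mb p0 l"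
    using LG_inf_subset_tau_z0 tau_z0_subset_LG_inf by (rule equalityI)
  then show ?thesis unfolding LG_def LG_fin_eq_sigma_x0 by simp
qed

end
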